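(* For every pair of integers $r$ and $k$ with $r\ge 2$, $k$ positive, $r+k\equiv 1\pmod 2$ and $k\le r$, there exist infinitely many triples $(G,P,d)$ such that (1) $G$ is a graph with $\chi(G)\le r$, (2) $P\subset V(G)$ and $|\mathcal{D}_G(P,2)|=3(r+k-1)$, (3) $d\colon P\to[r+k]$ is a precoloring of $P$ in $G$, and (4) $d$ cannot be extended to a $\frac{3r+k+1}{2}$-coloring of $G$.
   Context: For a graph $G$, $P\subset V(G)$ and a positive integer $k$, $\mathcal{D}_G(P,k)=\{\{x,y\}\subset P: x\ne y,\ d_G(x,y)\le k\}$, where $d_G$ is the distance in $G$. $[m]=\{1,\dots,m\}$. A precoloring of $P$ in $G$ is a proper coloring of $G[P]$; an $m$-coloring of $G$ is a proper coloring using at most $m$ colors; $d$ is extended by a coloring $f$ of $G$ if $f(v)=d(v)$ for all $v\in P$. *)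

theory Defs
  imports Main "HOL-Library.Extended_Nat"
begin

definition graph :: "nat set \<Rightarrow> nat set set \<Rightarrow> bool" where
  "graph V E \<longleftrightarrow> finite V \<and> (\<forall>e\<in>E. e \<subseteq> V \<and> card e = 2)"

definition adj :: "nat set set \<Rightarrow> nat \<Rightarrow> nat \<Rightarrow> bool" where
  "adj E x y \<longleftrightarrow> {x, y} \<in> E"

text \<open>A walk of length n from x to y: a vertex list with n+1 entries, consecutive entries adjacent.\<close>
definition walk :: "nat set \<Rightarrow> nat set set \<Rightarrow> nat list \<Rightarrow> bool" where
  "walk V E xs \<longleftrightarrow> xs \<noteq> [] \<and> set xs \<subseteq> V \<and> (\<forall>i. Suc i < length xs \<longrightarrow> adj E (xs ! i) (xs ! Suc i))"

text \<open>Graph distance (infinite if no walk exists).\<close>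
definition gdist :: "nat set \<Rightarrow> nat set set \<Rightarrow> nat \<Rightarrow> nat \<Rightarrow> enat" where
  "gdist V E x y = (INF n \<in> {n. \<exists>xs. walk V E xs \<and> hd xs = x \<and> last xs = y \<and> length xs = Suc n}. enat n)"

definition Dpairs :: "nat set \<Rightarrow> nat set set \<Rightarrow> nat set \<Rightarrow> nat \<Rightarrow> nat set set" where
  "Dpairs V E P k = {{x, y} | x y. x \<in> P \<and> y \<in> P \<and> x \<noteq> y \<and> gdist V E x y \<le> enat k}"

definition proper_on :: "nat set set \<Rightarrow> nat set \<Rightarrow> (nat \<Rightarrow> nat) \<Rightarrow> bool" where
  "proper_on E S f \<longleftrightarrow> (\<forall>x\<in>S. \<forall>y\<in>S. adj E x y \<longrightarrow> f x \<noteq> f y)"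

definition m_coloring :: "nat set \<Rightarrow> nat set set \<Rightarrow> nat \<Rightarrow> (nat \<Rightarrow> nat) \<Rightarrow> bool" where
  "m_coloring V E m f \<longleftrightarrow> proper_on E V f \<and> card (f ` V) \<le> m"

definition chromatic_le :: "nat set \<Rightarrow> nat set set \<Rightarrow> nat \<Rightarrow> bool" where
  "chromatic_le V E r \<longleftrightarrow> (\<exists>f. m_coloring V E r f)"

definition precoloring :: "nat set set \<Rightarrow> nat set \<Rightarrow> nat \<Rightarrow> (nat \<Rightarrow> nat) \<Rightarrow> bool" where
  "precoloring E P m d \<longleftrightarrow> proper_on E P d \<and> d ` P \<subseteq> {1..m}"

definition extends :: "nat set \<Rightarrow> (nat \<Rightarrow> nat) \<Rightarrow> (nat \<Rightarrow> nat) \<Rightarrow> bool" where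
  "extends P d f \<longleftrightarrow> (\<forall>v\<in>P. f v = d v)"

type_synonym triple = "(nat set \<times> nat set set) \<times> nat set \<times> (nat \<Rightarrow> nat)"

definition triple_iso :: "triple \<Rightarrow> triple \<Rightarrow> bool" where
  "triple_iso t t' \<longleftrightarrow> (case t of ((V, E), P, d) \<Rightarrow> case t' of ((V', E'), P', d') \<Rightarrow>
     (\<exists>h. bij_betw h V V' \<and> (\<forall>x\<in>V. \<forall>y\<in>V. adj E x y \<longleftrightarrow> adj E' (h x) (h y))
          \<and> h ` P = P' \<and> (\<forall>v\<in>P. d' (h v) = d v)))"

end

(* Let n = r + k. The graph consists of a complete (r - 1)-partite core with parts
   {Core j c | 3 \<le> c \<le> n}, an apex joined to the whole core, three hubs joined to the whole core,
   three spokes joined to the apex, and for every column 4 \<le> c \<le> n a marker joined to the vertex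
   of column c in every part. Hubs and spokes are precoloured 1, 2, 3, the marker of column c is
   precoloured c. Colouring part j with j, the spokes with 0 and everything else with r - 1 shows
   that the graph is r-colourable; the precoloured pairs at distance 2 are the hub pairs, the spoke
   pairs and the hub-marker pairs, 3 (n - 1) in total.
   In an extension, the apex and the vertices Core j 3 form an r-clique. Whenever Core j 3 receives
   a colour c \<in> {4..n}, the vertex Core j c needs a colour different from all of them (it sees the
   marker of colour c), and none of these colours lies in {1, 2, 3}. Counting the colours outside
   [n] then gives at least (n + 2 r + 2) / 2 > (3 r + k + 1) / 2 colours. Adding isolated vertices
   yields infinitely many pairwise non-isomorphic instances. *)

theory Submission
  imports Defs "HOL-Library.Countable"
begin

lemma INF_enat_le_enat_iff:
  "(INF n\<in>S. enat n) \<le> enat k \<longleftrightarrow> (\<exists>n\<in>S. n \<le> k)"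
proof
  assume le: "(INF n\<in>S. enat n) \<le> enat k"
  show "\<exists>n\<in>S. n \<le> k"
  proof (rule ccontr)
    assume "\<not> (\<exists>n\<in>S. n \<le> k)"
    then have "enat (Suc k) \<le> (INF n\<in>S. enat n)"
      by (auto intro!: INF_greatest)
    then have "enat (Suc k) \<le> enat k"
      using le by (rule order_trans)
    then show False
      by simp
  qed
next
  assume "\<exists>n\<in>S. n \<le> k"
  then show "(INF n\<in>S. enat n) \<le> enat k"
    by (auto intro: INF_lower2)
qed

lemma gdist_le_enat_iff:
  "gdist V E x y \<le> enat k \<longleftrightarrow>
     (\<exists>xs. walk V E xs \<and> hd xs = x \<and> last xs = y \<and> length xs \<le> Suc k)"
proof -
  have "(\<exists>n. (\<exists>xs. walk V E xs \<and> hd xs = x \<and> last xs = y \<and> length xs = Suc n) \<and> n \<le> k)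
      \<longleftrightarrow> (\<exists>xs. walk V E xs \<and> hd xs = x \<and> last xs = y \<and> length xs \<le> Suc k)"
    by (auto simp: walk_def) (metis Suc_le_mono Suc_pred length_greater_0_conv)
  then show ?thesis
    unfolding gdist_def INF_enat_le_enat_iff by simp
qed

lemma walk_Nil [simp]: "\<not> walk V E []"
  by (simp add: walk_def)

lemma walk_singleton [simp]: "walk V E [x] \<longleftrightarrow> x \<in> V"
  by (simp add: walk_def)

lemma walk_Cons_Cons [simp]:
  "walk V E (x # y # xs) \<longleftrightarrow> x \<in> V \<and> adj E x y \<and> walk V E (y # xs)"
  by (auto simp: walk_def nth_Cons' less_Suc_eq_0_disj split: if_splits)

lemma gdist_le_2_iff:
  assumes "x \<in> V" "y \<in> V"
  shows "gdist V E x y \<le> enat 2 \<longleftrightarrow>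
           x = y \<or> adj E x y \<or> (\<exists>w\<in>V. adj E x w \<and> adj E w y)"
proof -
  have "walk V E xs \<and> hd xs = x \<and> last xs = y \<and> length xs \<le> 3 \<longleftrightarrow>
      xs = [x] \<and> x = y \<or> xs = [x, y] \<and> adj E x y \<or>
      (\<exists>w\<in>V. xs = [x, w, y] \<and> adj E x w \<and> adj E w y)" for xs
    using assms
    by (cases xs rule: remdups_adj.cases; cases "tl (tl xs)") auto
  then show ?thesis
    unfolding gdist_le_enat_iff numeral_2_eq_2 numeral_3_eq_3 by blast
qed

definition encoded_edges :: "'a::countable set \<Rightarrow> ('a \<Rightarrow> 'a \<Rightarrow> bool) \<Rightarrow> nat set set" where
  "encoded_edges A R = {{to_nat x, to_nat y} | x y. x \<in> A \<and> y \<in> A \<and> R x y}"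

lemma adj_encoded_edges:
  assumes "symp R"
  shows "adj (encoded_edges A R) (to_nat x) (to_nat y) \<longleftrightarrow> x \<in> A \<and> y \<in> A \<and> R x y"
  using assms by (auto simp: adj_def encoded_edges_def doubleton_eq_iff dest: sympD)

lemma graph_encoded:
  assumes "finite A" and "\<And>x. \<not> R x x"
  shows "graph (to_nat ` A) (encoded_edges A R)"
  using assms unfolding graph_def encoded_edges_def by (auto simp: card_insert_if)

lemma proper_on_encoded_iff:
  assumes "symp R" and "S \<subseteq> A"
  shows "proper_on (encoded_edges A R) (to_nat ` S) f \<longleftrightarrow>
           (\<forall>x\<in>S. \<forall>y\<in>S. R x y \<longrightarrow> f (to_nat x) \<noteq> f (to_nat y))"
  using assms by (auto simp: proper_on_def adj_encoded_edges)

definition pairs_within_2 :: "'a set \<Rightarrow> ('a \<Rightarrow> 'a \<Rightarrow> bool) \<Rightarrow> 'a set \<Rightarrow> 'a set set" where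
  "pairs_within_2 A R P =
     {{x, y} | x y. x \<in> P \<and> y \<in> P \<and> x \<noteq> y \<and> (R x y \<or> (\<exists>w\<in>A. R x w \<and> R w y))}"

lemma image_doubleton_Collect:
  "image f ` {{x, y} | x y. Q x y} = {{f x, f y} | x y. Q x y}"
  by (auto simp: image_iff) (metis image_empty image_insert)

lemma Dpairs_encoded:
  assumes "symp R" and "P \<subseteq> A"
  shows "Dpairs (to_nat ` A) (encoded_edges A R) (to_nat ` P) 2 = image to_nat ` pairs_within_2 A R P"
proof -
  have near: "gdist (to_nat ` A) (encoded_edges A R) (to_nat x) (to_nat y) \<le> enat 2 \<longleftrightarrow>
      R x y \<or> (\<exists>w\<in>A. R x w \<and> R w y)" if "x \<in> P" "y \<in> P" "x \<noteq> y" for x y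
  proof -
    have "x \<in> A" "y \<in> A"
      using that \<open>P \<subseteq> A\<close> by auto
    then show ?thesis
      using \<open>x \<noteq> y\<close> by (simp add: gdist_le_2_iff adj_encoded_edges[OF \<open>symp R\<close>])
  qed
  have "Dpairs (to_nat ` A) (encoded_edges A R) (to_nat ` P) 2 =
      {{to_nat x, to_nat y} | x y. x \<in> P \<and> y \<in> P \<and> x \<noteq> y \<and>
        gdist (to_nat ` A) (encoded_edges A R) (to_nat x) (to_nat y) \<le> enat 2}"
    unfolding Dpairs_def by (auto 4 4)
  also have "\<dots> = {{to_nat x, to_nat y} | x y. x \<in> P \<and> y \<in> P \<and> x \<noteq> y \<and>
      (R x y \<or> (\<exists>w\<in>A. R x w \<and> R w y))}"
    using near by blast
  also have "\<dots> = image to_nat ` pairs_within_2 A R P"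
    unfolding pairs_within_2_def image_doubleton_Collect ..
  finally show ?thesis .
qed

lemma card_Dpairs_encoded:
  assumes "symp R" and "P \<subseteq> A"
  shows "card (Dpairs (to_nat ` A) (encoded_edges A R) (to_nat ` P) 2) = card (pairs_within_2 A R P)"
  unfolding Dpairs_encoded[OF assms] by (rule card_image) (simp add: inj_on_image)

lemma triple_iso_card_eq:
  "triple_iso ((V, E), P, d) ((V', E'), P', d') \<Longrightarrow> card V = card V'"
  by (auto simp: triple_iso_def dest: bij_betw_same_card)

lemma doubletons_swap_disj:
  "{{x, y} | x y. P x y \<or> P y x} = {{x, y} | x y. P x y}"
  by (auto simp: insert_commute)

lemma doubletons_disj:
  "{{x, y} | x y. P x y \<or> Q x y} = {{x, y} | x y. P x y} \<union> {{x, y} | x y. Q x y}"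
  by blast

lemma card_doubletons:
  assumes "finite S"
  shows "card {{x, y} | x y. x \<in> S \<and> y \<in> S \<and> x \<noteq> y} = card S choose 2"
proof -
  have "{{x, y} | x y. x \<in> S \<and> y \<in> S \<and> x \<noteq> y} = {B. B \<subseteq> S \<and> card B = 2}"
    by (auto simp: card_2_iff)
  then show ?thesis
    using assms by (simp add: n_subsets)
qed

lemma card_doubletons_disjoint:
  assumes "A \<inter> B = {}"
  shows "card {{x, y} | x y. x \<in> A \<and> y \<in> B} = card A * card B"
proof -
  have "inj_on (\<lambda>(x, y). {x, y}) (A \<times> B)"
    using assms by (auto simp: inj_on_def doubleton_eq_iff)
  moreover have "{{x, y} | x y. x \<in> A \<and> y \<in> B} = (\<lambda>(x, y). {x, y}) ` (A \<times> B)"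
    by auto
  ultimately show ?thesis
    by (simp add: card_image card_cartesian_product)
qed

(* Used: the colours of an extension, A: the colours of an r-clique, T \<supseteq> A: colours that
   avoid 1, 2, 3; each of A and T bounds the number of colours outside [n] from below. *)
lemma colour_count_bound:
  fixes Used T A :: "nat set"
  assumes "finite Used" "3 \<le> n" "{1..n} \<union> T \<subseteq> Used" "A \<subseteq> T" "T \<inter> {1, 2, 3} = {}"
    and "card T = card A + j" "card (A \<inter> {1..n}) \<le> j + 1"
  shows "n + 2 * card A + 2 \<le> 2 * card Used"
proof -
  have "finite T"
    using assms(1,3) by (auto intro: finite_subset)
  then have "finite A"
    using assms(4) by (rule finite_subset[rotated])
  have "4 \<le> x" if "x \<in> T" "1 \<le> x" for x
  proof -
    have "x \<noteq> 1" "x \<noteq> 2" "x \<noteq> 3"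
      using assms(5) \<open>x \<in> T\<close> by auto
    with \<open>1 \<le> x\<close> show ?thesis
      by linarith
  qed
  then have "card (T \<inter> {1..n}) \<le> card {4..n}"
    by (intro card_mono) auto
  then have small: "card (T \<inter> {1..n}) \<le> n - 3"
    by simp
  have T_split: "card T = card (T \<inter> {1..n}) + card (T - {1..n})"
    using \<open>finite T\<close> by (rule card_Int_Diff)
  have A_split: "card A = card (A \<inter> {1..n}) + card (A - {1..n})"
    using \<open>finite A\<close> by (rule card_Int_Diff)
  have "card (A - {1..n}) \<le> card (T - {1..n})"
    using \<open>finite T\<close> assms(4) by (intro card_mono) auto
  have "card ({1..n} \<union> (T - {1..n})) = n + card (T - {1..n})"
    using \<open>finite T\<close> by (subst card_Un_disjoint) auto
  moreover have "card ({1..n} \<union> (T - {1..n})) \<le> card Used"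
    using assms(1,3) by (intro card_mono) auto
  ultimately have "n + card (T - {1..n}) \<le> card Used"
    by simp
  with assms(2,6,7) small T_split A_split \<open>card (A - {1..n}) \<le> card (T - {1..n})\<close> show ?thesis
    by linarith
qed

lemma inj_on_clique:
  assumes "\<And>x y. x \<in> S \<Longrightarrow> y \<in> S \<Longrightarrow> x \<noteq> y \<Longrightarrow> R x y"
    and "\<And>x y. x \<in> S \<Longrightarrow> y \<in> S \<Longrightarrow> R x y \<Longrightarrow> f x \<noteq> f y"
  shows "inj_on f S"
  using assms unfolding inj_on_def by blast

datatype vertex = Hub nat | Spoke nat | Marker nat | Apex | Core nat nat | Isolated nat

instance vertex :: countable
  by countable_datatype

fun adjacent :: "vertex \<Rightarrow> vertex \<Rightarrow> bool" where
  "adjacent (Hub a) (Core j c) = True"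
| "adjacent (Core j c) (Hub a) = True"
| "adjacent (Marker c) (Core j c') = (c = c')"
| "adjacent (Core j c') (Marker c) = (c = c')"
| "adjacent (Spoke a) Apex = True"
| "adjacent Apex (Spoke a) = True"
| "adjacent Apex (Core j c) = True"
| "adjacent (Core j c) Apex = True"
| "adjacent (Core j c) (Core j' c') = (j \<noteq> j')"
| "adjacent _ _ = False"

lemma symp_adjacent: "symp adjacent"
proof (rule sympI)
  show "adjacent y x" if "adjacent x y" for x y
    using that by (cases x; cases y) auto
qed

lemma not_adjacent_self: "\<not> adjacent x x"
  by (cases x) auto

definition precoloured :: "nat \<Rightarrow> vertex set" where
  "precoloured n = Hub ` {1..3} \<union> Spoke ` {1..3} \<union> Marker ` {4..n}"

definition vertices :: "nat \<Rightarrow> nat \<Rightarrow> nat \<Rightarrow> vertex set" where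
  "vertices r n N = precoloured n \<union> {Apex} \<union> case_prod Core ` ({..<r - 1} \<times> {3..n})
     \<union> Isolated ` {..<N}"

fun precolour :: "vertex \<Rightarrow> nat" where
  "precolour (Hub a) = a"
| "precolour (Spoke a) = a"
| "precolour (Marker c) = c"
| "precolour _ = 0"

lemma mem_precoloured_iff [simp]:
  "Hub a \<in> precoloured n \<longleftrightarrow> 1 \<le> a \<and> a \<le> 3"
  "Spoke a \<in> precoloured n \<longleftrightarrow> 1 \<le> a \<and> a \<le> 3"
  "Marker c \<in> precoloured n \<longleftrightarrow> 4 \<le> c \<and> c \<le> n"
  "Apex \<notin> precoloured n"
  "Core j c \<notin> precoloured n"
  "Isolated i \<notin> precoloured n"
  by (auto simp: precoloured_def)

lemma mem_vertices_iff [simp]: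
  "Hub a \<in> vertices r n N \<longleftrightarrow> 1 \<le> a \<and> a \<le> 3"
  "Spoke a \<in> vertices r n N \<longleftrightarrow> 1 \<le> a \<and> a \<le> 3"
  "Marker c \<in> vertices r n N \<longleftrightarrow> 4 \<le> c \<and> c \<le> n"
  "Apex \<in> vertices r n N"
  "Core j c \<in> vertices r n N \<longleftrightarrow> j < r - 1 \<and> 3 \<le> c \<and> c \<le> n"
  "Isolated i \<in> vertices r n N \<longleftrightarrow> i < N"
  by (auto simp: vertices_def)

lemma finite_vertices: "finite (vertices r n N)"
  by (simp add: vertices_def precoloured_def)

lemma precoloured_subset_vertices: "precoloured n \<subseteq> vertices r n N"
  by (auto simp: vertices_def)

lemma card_vertices: "card (vertices r n N) = card (vertices r n 0) + N"
proof -
  have "vertices r n N = vertices r n 0 \<union> Isolated ` {..<N}"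
    by (auto simp: vertices_def)
  moreover have "vertices r n 0 \<inter> Isolated ` {..<N} = {}"
    by auto
  ultimately show ?thesis
    using finite_vertices by (simp add: card_Un_disjoint card_image inj_on_def)
qed

fun core_colour :: "nat \<Rightarrow> vertex \<Rightarrow> nat" where
  "core_colour r (Core j c) = j"
| "core_colour r (Spoke a) = 0"
| "core_colour r _ = r - 1"

lemma core_colour_proper:
  assumes "2 \<le> r" "x \<in> vertices r n N" "y \<in> vertices r n N" "adjacent x y"
  shows "core_colour r x \<noteq> core_colour r y"
  using assms by (cases x; cases y) auto

lemma core_colour_less:
  assumes "2 \<le> r" "x \<in> vertices r n N"
  shows "core_colour r x < r"
  using assms by (cases x) auto

lemma adjacent_precoloured_iff:
  "adjacent (Hub a) w \<longleftrightarrow> (\<exists>j c. w = Core j c)"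
  "adjacent (Spoke a) w \<longleftrightarrow> w = Apex"
  "adjacent (Marker c) w \<longleftrightarrow> (\<exists>j. w = Core j c)"
  by (cases w; auto)+

lemma common_neighbour_precoloured:
  assumes "2 \<le> r" "3 \<le> n" "x \<in> precoloured n" "y \<in> precoloured n" "x \<noteq> y"
  shows "(\<exists>w\<in>vertices r n N. adjacent x w \<and> adjacent w y) \<longleftrightarrow>
    x \<in> Hub ` {1..3} \<and> y \<in> Hub ` {1..3} \<or> x \<in> Spoke ` {1..3} \<and> y \<in> Spoke ` {1..3} \<or>
    x \<in> Hub ` {1..3} \<and> y \<in> Marker ` {4..n} \<or> x \<in> Marker ` {4..n} \<and> y \<in> Hub ` {1..3}"
  using assms by (cases x; cases y)
    (auto simp: adjacent_precoloured_iff symp_adjacent[THEN sympD] intro: bexI[of _ "Core 0 _"])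

lemma not_adjacent_precoloured:
  "x \<in> precoloured n \<Longrightarrow> y \<in> precoloured n \<Longrightarrow> \<not> adjacent x y"
  by (cases x; cases y) auto

definition close_precoloured :: "nat \<Rightarrow> vertex \<Rightarrow> vertex \<Rightarrow> bool" where
  "close_precoloured n x y \<longleftrightarrow>
     x \<in> Hub ` {1..3} \<and> y \<in> Hub ` {1..3} \<and> x \<noteq> y \<or>
     x \<in> Spoke ` {1..3} \<and> y \<in> Spoke ` {1..3} \<and> x \<noteq> y \<or>
     x \<in> Hub ` {1..3} \<and> y \<in> Marker ` {4..n}"

lemma within_2_precoloured_iff:
  assumes "2 \<le> r" "3 \<le> n"
  shows "x \<in> precoloured n \<and> y \<in> precoloured n \<and> x \<noteq> y \<and>
      (adjacent x y \<or> (\<exists>w\<in>vertices r n N. adjacent x w \<and> adjacent w y)) \<longleftrightarrow>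
    close_precoloured n x y \<or> close_precoloured n y x"
    (is "?within \<longleftrightarrow> ?close")
proof
  assume ?within
  then show ?close
    using common_neighbour_precoloured[OF assms, of x y N] not_adjacent_precoloured[of x n y]
    unfolding close_precoloured_def by blast
next
  assume ?close
  then have "x \<in> precoloured n" "y \<in> precoloured n"
    unfolding close_precoloured_def precoloured_def by blast+
  moreover have "x \<noteq> y"
    using \<open>?close\<close> unfolding close_precoloured_def by auto
  ultimately show ?within
    using \<open>?close\<close> common_neighbour_precoloured[OF assms, of x y N]
    unfolding close_precoloured_def by blast
qed

lemma pairs_within_2_precoloured:
  assumes "2 \<le> r" "3 \<le> n"
  shows "pairs_within_2 (vertices r n N) adjacent (precoloured n) =
    {{x, y} | x y. x \<in> Hub ` {1..3} \<and> y \<in> Hub ` {1..3} \<and> x \<noteq> y} \<union>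
    {{x, y} | x y. x \<in> Spoke ` {1..3} \<and> y \<in> Spoke ` {1..3} \<and> x \<noteq> y} \<union>
    {{x, y} | x y. x \<in> Hub ` {1..3} \<and> y \<in> Marker ` {4..n}}"
proof -
  have "pairs_within_2 (vertices r n N) adjacent (precoloured n) =
      {{x, y} | x y. close_precoloured n x y \<or> close_precoloured n y x}"
    unfolding pairs_within_2_def within_2_precoloured_iff[OF assms] ..
  then show ?thesis
    unfolding doubletons_swap_disj close_precoloured_def doubletons_disj by (simp only: Un_assoc)
qed

lemma card_pairs_within_2_precoloured:
  assumes "2 \<le> r" "3 \<le> n"
  shows "card (pairs_within_2 (vertices r n N) adjacent (precoloured n)) = 3 * (n - 1)"
proof -
  let ?HH = "{{x, y} | x y. x \<in> Hub ` {1..3} \<and> y \<in> Hub ` {1..3} \<and> x \<noteq> y}"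
  let ?SS = "{{x, y} | x y. x \<in> Spoke ` {1..3} \<and> y \<in> Spoke ` {1..3} \<and> x \<noteq> y}"
  let ?HM = "{{x, y} | x y. x \<in> Hub ` {1..3} \<and> y \<in> Marker ` {4..n}}"
  have "card ?HH = 3" "card ?SS = 3"
    by (simp_all add: card_doubletons card_image inj_on_def numeral_eq_Suc)
  moreover have "card ?HM = 3 * (n - 3)"
    by (subst card_doubletons_disjoint) (auto simp: card_image inj_on_def)
  moreover have "finite ?HH" "finite ?SS" "finite ?HM"
    by (auto intro: finite_subset[of _ "Pow (precoloured n)"] simp: precoloured_def)
  moreover have "?HH \<inter> ?SS = {}" "(?HH \<union> ?SS) \<inter> ?HM = {}"
    by (auto simp: doubleton_eq_iff)
  ultimately show ?thesis
    using assms by (simp add: pairs_within_2_precoloured card_Un_disjoint)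
qed

locale precolouring_extension =
  fixes r n N :: nat and f :: "vertex \<Rightarrow> nat"
  assumes two_le_r: "2 \<le> r" and three_le_n: "3 \<le> n"
    and proper: "\<And>x y. x \<in> vertices r n N \<Longrightarrow> y \<in> vertices r n N \<Longrightarrow> adjacent x y \<Longrightarrow> f x \<noteq> f y"
    and extends: "\<And>v. v \<in> precoloured n \<Longrightarrow> f v = precolour v"
begin

definition clique :: "vertex set" where
  "clique = insert Apex ((\<lambda>j. Core j 3) ` {..<r - 1})"

definition high_parts :: "nat set" where
  "high_parts = {j. j < r - 1 \<and> f (Core j 3) \<in> {4..n}}"

definition partners :: "vertex set" where
  "partners = (\<lambda>j. Core j (f (Core j 3))) ` high_parts"

lemma clique_subset_vertices: "clique \<subseteq> vertices r n N"
  using three_le_n by (auto simp: clique_def)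

lemma partners_subset_vertices: "partners \<subseteq> vertices r n N"
  by (auto simp: partners_def high_parts_def)

lemma card_colours_clique: "card (f ` clique) = r"
proof -
  have "inj_on f clique"
  proof (rule inj_on_clique[where R = adjacent])
    show "adjacent x y" if "x \<in> clique" "y \<in> clique" "x \<noteq> y" for x y
      using that by (auto simp: clique_def)
    show "f x \<noteq> f y" if "x \<in> clique" "y \<in> clique" "adjacent x y" for x y
      using that clique_subset_vertices proper by blast
  qed
  moreover have "card ((\<lambda>j. Core j 3) ` {..<r - 1}) = r - 1"
    by (simp add: card_image inj_on_def)
  moreover have "Apex \<notin> (\<lambda>j. Core j 3) ` {..<r - 1}"
    by auto
  ultimately show ?thesis
    using two_le_r by (simp add: card_image clique_def)
qed

lemma card_colours_partners: "card (f ` partners) = card high_parts"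
proof -
  have "inj_on f partners"
  proof (rule inj_on_clique[where R = adjacent])
    show "adjacent x y" if "x \<in> partners" "y \<in> partners" "x \<noteq> y" for x y
      using that by (auto simp: partners_def)
    show "f x \<noteq> f y" if "x \<in> partners" "y \<in> partners" "adjacent x y" for x y
      using that partners_subset_vertices proper by blast
  qed
  then show ?thesis
    by (simp add: card_image partners_def inj_on_def)
qed

lemma colours_clique_partners_disjoint: "f ` clique \<inter> f ` partners = {}"
proof -
  have "f x \<noteq> f y" if "x \<in> clique" "y \<in> partners" for x y
  proof -
    obtain j where j: "j \<in> high_parts" "y = Core j (f (Core j 3))"
      using \<open>y \<in> partners\<close> by (auto simp: partners_def)
    have "y \<in> vertices r n N"
      using \<open>y \<in> partners\<close> partners_subset_vertices by blast
    show ?thesis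
    proof (cases "x = Core j 3")
      case True
      \<comment> \<open>x and y lie in the same part, so it is the marker of column f x that separates them\<close>
      have "f y \<noteq> f (Marker (f x))"
        using proper[of "Marker (f x)" y] \<open>y \<in> vertices r n N\<close> j True
        by (simp add: high_parts_def)
      then show ?thesis
        using extends[of "Marker (f x)"] j True by (simp add: high_parts_def)
    next
      case False
      then have "adjacent x y"
        using \<open>x \<in> clique\<close> j by (auto simp: clique_def)
      then show ?thesis
        using proper clique_subset_vertices \<open>x \<in> clique\<close> \<open>y \<in> vertices r n N\<close> by blast
    qed
  qed
  then show ?thesis
    by blast
qed

lemma colours_avoid_hub_colours: "(f ` clique \<union> f ` partners) \<inter> {1, 2, 3} = {}"
proof -
  have "f v \<noteq> a" if "v \<in> clique \<union> partners" "a \<in> {1..3}" for v a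
    using that clique_subset_vertices partners_subset_vertices
      proper[of "Spoke a" v] proper[of "Hub a" v] extends[of "Spoke a"] extends[of "Hub a"]
    by (auto simp: clique_def partners_def)
  then show ?thesis
    by fastforce
qed

lemma card_colours_clique_in_range: "card (f ` clique \<inter> {1..n}) \<le> card high_parts + 1"
proof -
  have "f ` clique \<inter> {1..n} \<subseteq> insert (f Apex) ((\<lambda>j. f (Core j 3)) ` high_parts)"
  proof
    fix c
    assume c: "c \<in> f ` clique \<inter> {1..n}"
    then have "c \<notin> {1, 2, 3}"
      using colours_avoid_hub_colours by blast
    with c show "c \<in> insert (f Apex) ((\<lambda>j. f (Core j 3)) ` high_parts)"
      by (auto simp: clique_def high_parts_def)
  qed
  moreover have "finite high_parts"
    by (simp add: high_parts_def)
  ultimately have "card (f ` clique \<inter> {1..n}) \<le>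
      card (insert (f Apex) ((\<lambda>j. f (Core j 3)) ` high_parts))"
    by (intro card_mono) auto
  also have "\<dots> \<le> card high_parts + 1"
    using \<open>finite high_parts\<close> card_image_le[of high_parts "\<lambda>j. f (Core j 3)"]
    by (simp add: card_insert_if)
  finally show ?thesis .
qed

lemma range_subset_colours: "{1..n} \<subseteq> f ` vertices r n N"
proof
  fix c
  assume "c \<in> {1..n}"
  then have "c \<le> 3 \<and> Hub c \<in> precoloured n \<or> 4 \<le> c \<and> Marker c \<in> precoloured n"
    by auto
  then have "Hub c \<in> vertices r n N \<and> f (Hub c) = c \<or> Marker c \<in> vertices r n N \<and> f (Marker c) = c"
    using extends precoloured_subset_vertices by fastforce
  then show "c \<in> f ` vertices r n N"
    by (metis image_eqI)
qed

theorem card_colours: "n + 2 * r + 2 \<le> 2 * card (f ` vertices r n N)"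
proof -
  have "n + 2 * card (f ` clique) + 2 \<le> 2 * card (f ` vertices r n N)"
  proof (rule colour_count_bound)
    show "finite (f ` vertices r n N)"
      by (simp add: finite_vertices)
    show "{1..n} \<union> (f ` clique \<union> f ` partners) \<subseteq> f ` vertices r n N"
      using range_subset_colours clique_subset_vertices partners_subset_vertices by auto
    show "card (f ` clique \<union> f ` partners) = card (f ` clique) + card high_parts"
      using colours_clique_partners_disjoint card_colours_partners
        clique_subset_vertices partners_subset_vertices finite_vertices
      by (simp add: card_Un_disjoint finite_subset)
  qed (use three_le_n colours_avoid_hub_colours card_colours_clique_in_range in auto)
  then show ?thesis
    by (simp add: card_colours_clique)
qed

end

definition hard_instance :: "nat \<Rightarrow> nat \<Rightarrow> nat \<Rightarrow> triple" where
  "hard_instance r n N =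
     ((to_nat ` vertices r n N, encoded_edges (vertices r n N) adjacent),
      to_nat ` precoloured n, precolour \<circ> from_nat)"

lemma graph_hard_instance:
  "graph (to_nat ` vertices r n N) (encoded_edges (vertices r n N) adjacent)"
  using finite_vertices not_adjacent_self by (rule graph_encoded)

lemma chromatic_le_hard_instance:
  assumes "2 \<le> r"
  shows "chromatic_le (to_nat ` vertices r n N) (encoded_edges (vertices r n N) adjacent) r"
  unfolding chromatic_le_def m_coloring_def
proof (intro exI conjI)
  show "proper_on (encoded_edges (vertices r n N) adjacent) (to_nat ` vertices r n N)
      (core_colour r \<circ> from_nat)"
    using core_colour_proper[OF assms] by (simp add: proper_on_encoded_iff symp_adjacent)
  have "(core_colour r \<circ> from_nat) ` to_nat ` vertices r n N \<subseteq> {..<r}"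
    using core_colour_less[OF assms] by auto
  then show "card ((core_colour r \<circ> from_nat) ` to_nat ` vertices r n N) \<le> r"
    using card_mono[of "{..<r}"] by fastforce
qed

lemma card_Dpairs_hard_instance:
  assumes "2 \<le> r" "3 \<le> n"
  shows "card (Dpairs (to_nat ` vertices r n N) (encoded_edges (vertices r n N) adjacent)
      (to_nat ` precoloured n) 2) = 3 * (n - 1)"
  using assms
  by (simp add: card_Dpairs_encoded symp_adjacent precoloured_subset_vertices
      card_pairs_within_2_precoloured)

lemma precoloring_hard_instance:
  assumes "3 \<le> n"
  shows "precoloring (encoded_edges (vertices r n N) adjacent) (to_nat ` precoloured n) n
     (precolour \<circ> from_nat)"
  unfolding precoloring_def
proof
  show "proper_on (encoded_edges (vertices r n N) adjacent) (to_nat ` precoloured n)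
      (precolour \<circ> from_nat)"
    by (simp add: proper_on_encoded_iff symp_adjacent precoloured_subset_vertices
        not_adjacent_precoloured)
  show "(precolour \<circ> from_nat) ` to_nat ` precoloured n \<subseteq> {1..n}"
    using assms by (auto simp: precoloured_def)
qed

lemma extension_card_hard_instance:
  assumes "2 \<le> r" "3 \<le> n"
    and "proper_on (encoded_edges (vertices r n N) adjacent) (to_nat ` vertices r n N) f"
    and "extends (to_nat ` precoloured n) (precolour \<circ> from_nat) f"
  shows "n + 2 * r + 2 \<le> 2 * card (f ` to_nat ` vertices r n N)"
proof -
  have "n + 2 * r + 2 \<le> 2 * card ((f \<circ> to_nat) ` vertices r n N)"
  proof (rule precolouring_extension.card_colours, unfold_locales)
    show "2 \<le> r" "3 \<le> n"
      using assms(1,2) by auto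
    show "(f \<circ> to_nat) x \<noteq> (f \<circ> to_nat) y"
      if "x \<in> vertices r n N" "y \<in> vertices r n N" "adjacent x y" for x y
      using assms(3) that by (simp add: proper_on_encoded_iff symp_adjacent)
    show "(f \<circ> to_nat) v = precolour v" if "v \<in> precoloured n" for v
      using assms(4) that by (simp add: extends_def)
  qed
  then show ?thesis
    by (simp add: image_comp)
qed

lemma no_extension_hard_instance:
  assumes "2 \<le> r" "3 \<le> n" "2 * m < n + 2 * r + 2"
  shows "\<not> (\<exists>f. m_coloring (to_nat ` vertices r n N) (encoded_edges (vertices r n N) adjacent) m f
               \<and> extends (to_nat ` precoloured n) (precolour \<circ> from_nat) f)"
proof
  assume "\<exists>f. m_coloring (to_nat ` vertices r n N) (encoded_edges (vertices r n N) adjacent) m f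
               \<and> extends (to_nat ` precoloured n) (precolour \<circ> from_nat) f"
  then obtain f where
      "proper_on (encoded_edges (vertices r n N) adjacent) (to_nat ` vertices r n N) f"
      "card (f ` to_nat ` vertices r n N) \<le> m"
      "extends (to_nat ` precoloured n) (precolour \<circ> from_nat) f"
    by (auto simp: m_coloring_def)
  with extension_card_hard_instance[OF assms(1,2)] assms(3) show False
    by fastforce
qed

lemma hard_instance_properties:
  assumes "2 \<le> r" "3 \<le> n" "2 * m < n + 2 * r + 2"
    and "hard_instance r n N = ((V, E), P, d)"
  shows "graph V E \<and> chromatic_le V E r \<and> P \<subseteq> V \<and> card (Dpairs V E P 2) = 3 * (n - 1)
    \<and> precoloring E P n d \<and> \<not> (\<exists>f. m_coloring V E m f \<and> extends P d f)"
  using assms(4)[unfolded hard_instance_def, symmetric] assms(1-3)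
  by (simp add: graph_hard_instance chromatic_le_hard_instance image_mono precoloured_subset_vertices
      card_Dpairs_hard_instance precoloring_hard_instance no_extension_hard_instance)

lemma card_vertices_hard_instance:
  "card (to_nat ` vertices r n N) = card (vertices r n 0) + N"
  by (simp add: card_image card_vertices[of r n N])

lemma inj_hard_instance: "inj (hard_instance r n)"
proof (rule injI)
  fix N N'
  assume "hard_instance r n N = hard_instance r n N'"
  then have "card (to_nat ` vertices r n N) = card (to_nat ` vertices r n N')"
    by (simp add: hard_instance_def)
  then show "N = N'"
    by (simp add: card_vertices_hard_instance)
qed

lemma triple_iso_hard_instance:
  assumes "triple_iso (hard_instance r n N) (hard_instance r n N')"
  shows "N = N'"
proof -
  have "card (to_nat ` vertices r n N) = card (to_nat ` vertices r n N')"
    using assms triple_iso_card_eq unfolding hard_instance_def by blast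
  then show ?thesis
    by (simp add: card_vertices_hard_instance)
qed

theorem theorem7:
  fixes r k :: nat
  assumes "r \<ge> 2" and "k \<ge> 1" and "odd (r + k)" and "k \<le> r"
  shows "\<exists>S :: triple set. infinite S
    \<and> (\<forall>t\<in>S. \<forall>t'\<in>S. t \<noteq> t' \<longrightarrow> \<not> triple_iso t t')
    \<and> (\<forall>((V, E), P, d) \<in> S.
          graph V E \<and> chromatic_le V E r
        \<and> P \<subseteq> V \<and> card (Dpairs V E P 2) = 3 * (r + k - 1)
        \<and> precoloring E P (r + k) d
        \<and> \<not> (\<exists>f. m_coloring V E ((3 * r + k + 1) div 2) f \<and> extends P d f))"
proof (intro exI conjI)
  let ?n = "r + k"
  have "3 \<le> ?n"
    using assms by simp
  show "infinite (range (hard_instance r ?n))"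
    using inj_hard_instance by (rule range_inj_infinite)
  show "\<forall>t\<in>range (hard_instance r ?n). \<forall>t'\<in>range (hard_instance r ?n).
      t \<noteq> t' \<longrightarrow> \<not> triple_iso t t'"
    using triple_iso_hard_instance by blast
  have m_bound: "2 * ((3 * r + k + 1) div 2) < ?n + 2 * r + 2"
    by simp
  show "\<forall>((V, E), P, d) \<in> range (hard_instance r ?n).
          graph V E \<and> chromatic_le V E r
        \<and> P \<subseteq> V \<and> card (Dpairs V E P 2) = 3 * (r + k - 1)
        \<and> precoloring E P (r + k) d
        \<and> \<not> (\<exists>f. m_coloring V E ((3 * r + k + 1) div 2) f \<and> extends P d f)"
    using hard_instance_properties[OF \<open>r \<ge> 2\<close> \<open>3 \<le> ?n\<close> m_bound]
    by (auto split: prod.split)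
qed

end
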